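(* Let $f:\mathbb{R}^d\to\mathbb{R}$ be twice differentiable with $L$-Lipschitz Hessian. Let $x,g\in\mathbb{R}^d$, $H\in\mathbb{R}^{d\times d}$ symmetric, $M\ge L$, let $x^+$ be a global minimizer of $y\mapsto\Omega_{M,g,H}(y,x)$ and $r:=\|x^+-x\|$. Then $$ \frac{1}{\sqrt{M}}\|\nabla f(x^+)\|^{3/2}\;\le\;3Mr^3+\frac{2}{\sqrt{M}}\|\nabla f(x)-g\|^{3/2}+\frac{1}{M^2}\|\nabla^2 f(x)-H\|^3 . $$
   Context: $\|\cdot\|$ is the Euclidean norm on vectors and the spectral norm on symmetric matrices. The Hessian of $f$ is $L$-Lipschitz means $\|\nabla^2 f(x)-\nabla^2 f(y)\|\le L\|x-y\|$ for all $x,y$. For $M>0$, $g\in\mathbb{R}^d$ and symmetric $H$, $\Omega_{M,g,H}(y,x):=\langle g,y-x\rangle+\frac12\langle H(y-x),y-x\rangle+\frac{M}{6}\|y-x\|^3$. *)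

theory Defs
  imports "HOL-Analysis.Analysis"
begin

definition spec_norm :: "real^'n^'n \<Rightarrow> real" where
  "spec_norm A = onorm (\<lambda>v. A *v v)"

definition Omega :: "real \<Rightarrow> real^'n \<Rightarrow> real^'n^'n \<Rightarrow> real^'n \<Rightarrow> real^'n \<Rightarrow> real" where
  "Omega M g H y x = g \<bullet> (y - x) + (1/2) * ((H *v (y - x)) \<bullet> (y - x)) + (M / 6) * norm (y - x) ^ 3"

end

theory Submission imports Defs begin

text \<open>
  Write \<open>h = x\<^sup>+ - x\<close>, \<open>r = \<parallel>h\<parallel>\<close>. Stationarity of the cubic model at its minimizer gives
  \<open>g + H h + (M r / 2) h = 0\<close>. Substituting this for \<open>g\<close> in the second-order Taylor expansion of
  \<open>\<nabla>f\<close> around \<open>x\<close>, whose remainder is at most \<open>L r\<^sup>2 / 2\<close>, yields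
  \<open>\<parallel>\<nabla>f(x\<^sup>+)\<parallel> \<le> M r\<^sup>2 + \<parallel>\<nabla>f(x) - g\<parallel> + \<parallel>\<nabla>\<^sup>2f(x) - H\<parallel> r\<close>.
  With \<open>T = \<parallel>\<nabla>f(x\<^sup>+)\<parallel>\<^sup>1\<^sup>/\<^sup>2\<close>, \<open>A = \<surd>M r\<close>, \<open>B = \<parallel>\<nabla>f(x) - g\<parallel>\<^sup>1\<^sup>/\<^sup>2\<close> and
  \<open>D = \<parallel>\<nabla>\<^sup>2f(x) - H\<parallel> / \<surd>M\<close> this reads \<open>T\<^sup>2 \<le> A\<^sup>2 + B\<^sup>2 + A D\<close>, and the claim, multiplied by
  \<open>\<surd>M\<close>, is the elementary consequence \<open>T\<^sup>3 \<le> 3 A\<^sup>3 + 2 B\<^sup>3 + D\<^sup>3\<close> for nonnegative reals.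
\<close>

lemma has_derivative_norm_cube:
  fixes y :: "'a::real_inner"
  shows "((\<lambda>z. norm z ^ 3) has_derivative (\<lambda>v. 3 * norm y * (y \<bullet> v))) (at y)"
proof (cases "y = 0")
  case True
  have "((\<lambda>h. norm h ^ 2) \<longlongrightarrow> 0) (at (0::'a))"
    by (rule tendsto_eq_intros | simp)+
  then have "((\<lambda>h. norm (norm (0 + h) ^ 3 - norm (0::'a) ^ 3 - 0) / norm h) \<longlongrightarrow> 0) (at (0::'a))"
    by (rule Lim_transform_eventually, intro eventually_at_filter[THEN iffD2])
       (auto simp: power3_eq_cube power2_eq_square)
  with True show ?thesis
    by (simp add: has_derivative_at bounded_linear_zero)
next
  case False
  have "(\<lambda>v. of_nat 3 * (v \<bullet> sgn y) * norm y ^ (3 - 1)) = (\<lambda>v. 3 * norm y * (y \<bullet> v))"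
    using False by (auto simp: sgn_div_norm power2_eq_square inner_commute)
  with has_derivative_power[OF has_derivative_norm[OF False], where n=3] show ?thesis
    by simp
qed

lemma spec_norm_nonneg: "0 \<le> spec_norm A"
  unfolding spec_norm_def by (rule onorm_pos_le[OF matrix_vector_mul_bounded_linear])

lemma norm_matrix_vector_mult_le_spec_norm: "norm (A *v v) \<le> spec_norm A * norm v"
  unfolding spec_norm_def by (rule onorm[OF matrix_vector_mul_bounded_linear])

lemma symmetric_matrix_inner_commute:
  fixes H :: "real^'n^'n"
  assumes "transpose H = H"
  shows "(H *v v) \<bullet> w = (H *v w) \<bullet> v"
proof -
  have "(H *v v) \<bullet> w = w \<bullet> (H *v v)"
    by (rule inner_commute)
  also have "\<dots> = (w v* H) \<bullet> v"
    by (simp add: dot_lmul_matrix)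
  also have "w v* H = H *v w"
    using vector_transpose_matrix[of w H] assms by simp
  finally show ?thesis .
qed

lemma has_derivative_Omega:
  fixes H :: "real^'n^'n"
  assumes "transpose H = H"
  shows "((\<lambda>y. Omega M g H y x) has_derivative
           (\<lambda>v. (g + H *v (y - x) + (M/2 * norm (y - x)) *\<^sub>R (y - x)) \<bullet> v)) (at y)"
proof -
  have cube: "((\<lambda>y. norm (y - x) ^ 3) has_derivative (\<lambda>v. 3 * norm (y - x) * ((y - x) \<bullet> (v - 0)))) (at y)"
    by (rule has_derivative_compose[of "\<lambda>y. y - x" _ y UNIV "\<lambda>z. norm z ^ 3", simplified,
          OF _ has_derivative_norm_cube])
       (rule derivative_eq_intros | simp)+
  have lin: "((\<lambda>y. H *v (y - x)) has_derivative (\<lambda>v. H *v (v - 0))) (at y)"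
    by (rule bounded_linear.has_derivative[OF matrix_vector_mul_bounded_linear])
       (rule derivative_eq_intros | simp)+
  have "((\<lambda>y. Omega M g H y x) has_derivative
          (\<lambda>v. g \<bullet> (v - 0) + (1/2) * ((H *v (y - x)) \<bullet> (v - 0) + (H *v (v - 0)) \<bullet> (y - x))
               + (M/6) * (3 * norm (y - x) * ((y - x) \<bullet> (v - 0))))) (at y)"
    unfolding Omega_def by (rule derivative_eq_intros cube lin | simp)+
  moreover have "(\<lambda>v. g \<bullet> (v - 0) + (1/2) * ((H *v (y - x)) \<bullet> (v - 0) + (H *v (v - 0)) \<bullet> (y - x))
               + (M/6) * (3 * norm (y - x) * ((y - x) \<bullet> (v - 0))))
      = (\<lambda>v. (g + H *v (y - x) + (M/2 * norm (y - x)) *\<^sub>R (y - x)) \<bullet> v)"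
    using symmetric_matrix_inner_commute[OF assms] by (auto simp: inner_add_left algebra_simps)
  ultimately show ?thesis by simp
qed

lemma Omega_minimizer_stationary:
  fixes H :: "real^'n^'n"
  assumes "transpose H = H" and "\<And>y. Omega M g H xp x \<le> Omega M g H y x"
  shows "g + H *v (xp - x) + (M/2 * norm (xp - x)) *\<^sub>R (xp - x) = 0"
    (is "?w = 0")
proof -
  have "(\<lambda>v. ?w \<bullet> v) = (\<lambda>v. 0)"
    using differential_zero_maxmin[of xp UNIV "\<lambda>y. Omega M g H y x",
        OF _ _ has_derivative_Omega[OF assms(1)]] assms(2) by auto
  then have "?w \<bullet> ?w = 0" by metis
  then show ?thesis by simp
qed

lemma inner_gradient_taylor_remainder_le:
  fixes grad :: "real^'n \<Rightarrow> real^'n" and Hess :: "real^'n \<Rightarrow> real^'n^'n"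
  assumes hess: "\<And>z. (grad has_derivative (\<lambda>h. Hess z *v h)) (at z)"
    and lip: "\<And>y z. spec_norm (Hess y - Hess z) \<le> L * norm (y - z)"
  shows "w \<bullet> (grad (x + h) - grad x - Hess x *v h) \<le> L * norm h ^ 2 / 2 * norm w"
proof -
  define \<phi> where "\<phi> t = w \<bullet> (grad (x + t *\<^sub>R h) - grad x - t *\<^sub>R (Hess x *v h))
                          - L * norm h ^ 2 / 2 * norm w * t\<^sup>2" for t
  define \<phi>' where "\<phi>' t = w \<bullet> (Hess (x + t *\<^sub>R h) *v h - Hess x *v h) - L * norm h ^ 2 * norm w * t" for t
  have deriv: "DERIV \<phi> t :> \<phi>' t" for t
  proof -
    have grad_line: "((\<lambda>t. grad (x + t *\<^sub>R h)) has_derivative (\<lambda>s. Hess (x + t *\<^sub>R h) *v (s *\<^sub>R h))) (at t)"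
      by (rule has_derivative_compose[of "\<lambda>t. x + t *\<^sub>R h" _ t UNIV grad, simplified, OF _ hess])
         (rule derivative_eq_intros | simp)+
    have "(\<phi> has_derivative (\<lambda>s. w \<bullet> (Hess (x + t *\<^sub>R h) *v (s *\<^sub>R h) - 0 - s *\<^sub>R (Hess x *v h))
                 - L * norm h ^ 2 / 2 * norm w * (of_nat 2 * s * t ^ (2-1)))) (at t)"
      unfolding \<phi>_def by (rule derivative_eq_intros grad_line | simp)+
    moreover have "(\<lambda>s. w \<bullet> (Hess (x + t *\<^sub>R h) *v (s *\<^sub>R h) - 0 - s *\<^sub>R (Hess x *v h))
                 - L * norm h ^ 2 / 2 * norm w * (of_nat 2 * s * t ^ (2-1))) = (\<lambda>s. s * \<phi>' t)"
      by (auto simp: \<phi>'_def matrix_vector_mult_scaleR inner_diff_right algebra_simps)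
    ultimately show ?thesis
      by (simp add: has_field_derivative_def mult.commute[of _ "\<phi>' t"])
  qed
  have nonpos: "\<phi>' t \<le> 0" if "0 \<le> t" "t \<le> 1" for t
  proof -
    have "w \<bullet> (Hess (x + t *\<^sub>R h) *v h - Hess x *v h) \<le> norm w * norm ((Hess (x + t *\<^sub>R h) - Hess x) *v h)"
      using norm_cauchy_schwarz by (simp add: matrix_vector_mult_diff_rdistrib)
    also have "\<dots> \<le> norm w * (spec_norm (Hess (x + t *\<^sub>R h) - Hess x) * norm h)"
      by (rule mult_left_mono[OF norm_matrix_vector_mult_le_spec_norm norm_ge_zero])
    also have "\<dots> \<le> norm w * (L * (t * norm h) * norm h)"
      using lip[of "x + t *\<^sub>R h" x] that by (intro mult_left_mono mult_right_mono) auto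
    finally show ?thesis by (simp add: \<phi>'_def power2_eq_square algebra_simps)
  qed
  have "\<phi> 1 \<le> \<phi> 0"
    by (rule DERIV_nonpos_imp_nonincreasing[of 0 1 \<phi>]) (use deriv nonpos in auto)
  then show ?thesis by (simp add: \<phi>_def)
qed

lemma gradient_taylor_remainder_le:
  fixes grad :: "real^'n \<Rightarrow> real^'n" and Hess :: "real^'n \<Rightarrow> real^'n^'n"
  assumes hess: "\<And>z. (grad has_derivative (\<lambda>h. Hess z *v h)) (at z)"
    and lip: "\<And>y z. spec_norm (Hess y - Hess z) \<le> L * norm (y - z)"
  shows "norm (grad (x + h) - grad x - Hess x *v h) \<le> L * norm h ^ 2 / 2"
proof (cases "h = 0")
  case False
  define v where "v = grad (x + h) - grad x - Hess x *v h"
  have "0 \<le> L * norm h"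
    using lip[of h 0] spec_norm_nonneg[of "Hess h - Hess 0"] by simp
  with False have "0 \<le> L * norm h ^ 2 / 2"
    by (simp add: power2_eq_square zero_le_mult_iff)
  moreover have "norm v * norm v \<le> L * norm h ^ 2 / 2 * norm v"
    using inner_gradient_taylor_remainder_le[OF hess lip, of v x h]
    by (simp add: v_def power2_eq_square flip: power2_norm_eq_inner)
  ultimately show ?thesis
    unfolding v_def[symmetric]
    by (cases "norm v = 0") (simp_all add: mult_le_cancel_right)
qed simp

lemma gradient_norm_le_at_cubic_step:
  fixes grad :: "real^'n \<Rightarrow> real^'n" and Hess :: "real^'n \<Rightarrow> real^'n^'n"
  assumes hess: "\<And>z. (grad has_derivative (\<lambda>h. Hess z *v h)) (at z)"
    and lip: "\<And>y z. spec_norm (Hess y - Hess z) \<le> L * norm (y - z)"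
    and "L \<le> M" and "0 \<le> M"
    and stationary: "g + H *v (xp - x) + (M/2 * norm (xp - x)) *\<^sub>R (xp - x) = 0"
  shows "norm (grad xp) \<le> M * norm (xp - x) ^ 2 + norm (grad x - g)
                           + spec_norm (Hess x - H) * norm (xp - x)"
proof -
  define h where "h = xp - x"
  define v where "v = grad xp - grad x - Hess x *v h"
  have "L * norm h ^ 2 / 2 \<le> M * norm h ^ 2 / 2"
    using \<open>L \<le> M\<close> by (simp add: mult_right_mono divide_right_mono)
  then have "norm v \<le> M * norm h ^ 2 / 2"
    using gradient_taylor_remainder_le[OF hess lip, of x h] unfolding v_def h_def by simp
  moreover have "grad xp = v + (grad x - g) + (Hess x - H) *v h - (M/2 * norm h) *\<^sub>R h"
    using stationary unfolding v_def h_def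
    by (simp add: algebra_simps matrix_vector_mult_diff_rdistrib eq_neg_iff_add_eq_0)
  then have "norm (grad xp) \<le> norm v + norm (grad x - g) + norm ((Hess x - H) *v h)
                                + norm ((M/2 * norm h) *\<^sub>R h)"
    by (smt (verit) norm_triangle_ineq norm_triangle_ineq4)
  moreover have "norm ((M/2 * norm h) *\<^sub>R h) \<le> M * norm h ^ 2 / 2"
    using \<open>0 \<le> M\<close> by (simp add: power2_eq_square abs_mult)
  ultimately show ?thesis
    using norm_matrix_vector_mult_le_spec_norm[of "Hess x - H" h] unfolding h_def by simp
qed

lemma cube_le_of_square_le:
  fixes T A B D :: real
  assumes "0 \<le> T" "0 \<le> A" "0 \<le> B" "0 \<le> D" and "T\<^sup>2 \<le> A\<^sup>2 + B\<^sup>2 + A * D"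
  shows "T ^ 3 \<le> 3 * A ^ 3 + 2 * B ^ 3 + D ^ 3"
proof -
  \<comment> \<open>Young-type bound, from \<open>0 \<le> (T - 2X)\<^sup>2 (T + 4X)\<close>\<close>
  have young: "T * X\<^sup>2 \<le> T ^ 3 / 12 + 4/3 * X ^ 3" if "0 \<le> X" for X
  proof -
    have "0 \<le> (T - 2 * X)\<^sup>2 * (T + 4 * X)" using that assms(1) by simp
    then show ?thesis by (simp add: power2_eq_square power3_eq_cube algebra_simps)
  qed
  have "A * D \<le> A\<^sup>2 / 2 + D\<^sup>2 / 2"
    using sum_squares_ge_zero[of "A - D" 0] by (simp add: power2_eq_square algebra_simps)
  with assms(5) have "T * T\<^sup>2 \<le> T * (3/2 * A\<^sup>2 + B\<^sup>2 + 1/2 * D\<^sup>2)"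
    using assms(1) by (intro mult_left_mono) auto
  also have "\<dots> = 3/2 * (T * A\<^sup>2) + T * B\<^sup>2 + 1/2 * (T * D\<^sup>2)"
    by (simp add: algebra_simps)
  also have "\<dots> \<le> 3/2 * (T ^ 3 / 12 + 4/3 * A ^ 3) + (T ^ 3 / 12 + 4/3 * B ^ 3)
                   + 1/2 * (T ^ 3 / 12 + 4/3 * D ^ 3)"
    using young assms(2-4) by (intro add_mono mult_left_mono) auto
  finally have "3/4 * T ^ 3 \<le> 2 * A ^ 3 + 4/3 * B ^ 3 + 2/3 * D ^ 3"
    by (simp add: power3_eq_cube power2_eq_square field_simps)
  moreover have "0 \<le> A ^ 3" "0 \<le> B ^ 3" "0 \<le> D ^ 3"
    using assms(2-4) by simp_all
  ultimately show ?thesis by linarith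
qed

lemma powr_three_halves:
  assumes "0 \<le> u"
  shows "u powr (3/2) = sqrt u ^ 3"
proof -
  have "sqrt u ^ 3 = (u powr (1/2)) ^ 3"
    using powr_half_sqrt[OF assms] by simp
  also have "\<dots> = (u powr (1/2)) powr 3"
    by simp
  also have "\<dots> = u powr (3/2)"
    by (simp add: powr_powr)
  finally show ?thesis by simp
qed

lemma three_halves_power_le_of_quadratic_bound:
  fixes M G r \<delta> \<sigma> :: real
  assumes "0 < M" "0 \<le> G" "0 \<le> r" "0 \<le> \<delta>" "0 \<le> \<sigma>"
    and "G \<le> M * r\<^sup>2 + \<delta> + \<sigma> * r"
  shows "1 / sqrt M * G powr (3/2) \<le> 3 * M * r ^ 3 + 2 / sqrt M * \<delta> powr (3/2) + 1 / M\<^sup>2 * \<sigma> ^ 3"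
proof -
  define m where "m = sqrt M"
  have "0 < m" and m_sq: "M = m\<^sup>2"
    using assms(1) by (simp_all add: m_def)
  have "sqrt G ^ 3 \<le> 3 * (m * r) ^ 3 + 2 * sqrt \<delta> ^ 3 + (\<sigma> / m) ^ 3"
  proof (rule cube_le_of_square_le)
    show "(sqrt G)\<^sup>2 \<le> (m * r)\<^sup>2 + (sqrt \<delta>)\<^sup>2 + m * r * (\<sigma> / m)"
      using assms \<open>0 < m\<close> by (simp add: m_sq power_mult_distrib mult.commute)
  qed (use assms \<open>0 < m\<close> in auto)
  then have "sqrt G ^ 3 / m \<le> (3 * (m * r) ^ 3 + 2 * sqrt \<delta> ^ 3 + (\<sigma> / m) ^ 3) / m"
    using \<open>0 < m\<close> by (simp add: divide_right_mono)
  also have "\<dots> = 3 * M * r ^ 3 + 2 / m * sqrt \<delta> ^ 3 + 1 / M\<^sup>2 * \<sigma> ^ 3"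
    using \<open>0 < m\<close> by (simp add: m_sq power_mult_distrib power_divide field_simps) algebra
  finally show ?thesis
    using assms by (simp add: powr_three_halves m_def)
qed

theorem mainTheorem2:
  fixes f :: "real^'n \<Rightarrow> real"
    and grad :: "real^'n \<Rightarrow> real^'n"
    and Hess :: "real^'n \<Rightarrow> real^'n^'n"
    and L M :: real and x g xp :: "real^'n" and H :: "real^'n^'n"
  assumes grad: "\<And>z. (f has_derivative (\<lambda>h. grad z \<bullet> h)) (at z)"
    and hess: "\<And>z. (grad has_derivative (\<lambda>h. Hess z *v h)) (at z)"
    and lip: "\<And>y z. spec_norm (Hess y - Hess z) \<le> L * norm (y - z)"
    and symH: "transpose H = H"
    and Mpos: "M > 0" and M_ge_L: "M \<ge> L"
    and minim: "\<And>y. Omega M g H xp x \<le> Omega M g H y x"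
  shows "(1 / sqrt M) * norm (grad xp) powr (3/2)
     \<le> 3 * M * norm (xp - x) ^ 3 + (2 / sqrt M) * norm (grad x - g) powr (3/2)
        + (1 / M^2) * spec_norm (Hess x - H) ^ 3"
  \<comment> \<open>\<open>f\<close> enters only through \<open>grad\<close>.\<close>
proof (rule three_halves_power_le_of_quadratic_bound)
  show "norm (grad xp) \<le> M * (norm (xp - x))\<^sup>2 + norm (grad x - g)
                           + spec_norm (Hess x - H) * norm (xp - x)"
    using Mpos by (intro gradient_norm_le_at_cubic_step[OF hess lip M_ge_L _
          Omega_minimizer_stationary[OF symH minim]]) simp
qed (use Mpos spec_norm_nonneg in auto)

end
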